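(* Let $\Gamma=(V,E,\ell)$ be a finite labeled simplicial graph with all labels even whose Artin group $A_\Gamma$ is of FC-type, let $\mathbb{K}$ be a field, and let $\chi:A_\Gamma\to\mathbb{Z}$ be a surjective, $\mathbb{K}$ non-resonant homomorphism. Fix $k$ and let $\bar X=(X_1,\dots,X_r)$ be a list of distinct simplices of $\mathcal{F}^f(\Gamma)$ with $k+2$ vertices and $\bar Y=(Y_1,\dots,Y_r)$ a list of distinct simplices with $k+1$ vertices. Let $\mathfrak{m}^\chi_{(\bar X,\bar Y)}\in\mathbb{K}[t^{\pm1}]$ be the $r\times r$ minor of $M^\chi_{k+1}(t)$ with rows/columns indexed by $\bar X,\bar Y$, and $\mathfrak{m}_{(\bar X,\bar Y)}\in\mathbb{K}$ the corresponding minor of $M_{k+1}$. Then: (i) $\mathfrak{m}^\chi_{(\bar X,\bar Y)}=\dfrac{\mathbf{p}_{\bar X}\mathbf{q}_{\bar X}}{\mathbf{p}_{\bar Y}\mathbf{q}_{\bar Y}}\,\mathfrak{m}_{(\bar X,\bar Y)}$; (ii) $\mathfrak{m}^\chi_{(\bar X,\bar Y)}\neq 0$ if and only if $(\bar X,\bar Y)$ is acyclic of order $r$; (iii) the largest $r$ for which some $r\times r$ minor $\mathfrak{m}^\chi_{(\bar X,\bar Y)}$ is nonzero is $r=\dim_{\mathbb{K}}\operatorname{im}\partial_{k+1}$.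
   Context: $\Gamma=(V,E,\ell)$: finite simplicial graph, labels $\ell(e)=2\tilde\ell(e)$, $\tilde\ell(e)\ge1$. $A_\Gamma=\langle g_v\ (v\in V)\mid (g_vg_w)^{\tilde\ell(e)}=(g_wg_v)^{\tilde\ell(e)},\ e=\{v,w\}\in E\rangle$. For a clique $X\subseteq V$, $W_X$ is the Coxeter group on $g_v$ ($v\in X$) with $g_v^2=1$, $(g_vg_w)^{\ell(\{v,w\})}=1$; FC-type means all such $W_X$ are finite. $\mathcal{F}^f(\Gamma)$ is the simplicial complex on $V$ whose simplices are cliques $X$ with $W_X$ finite (plus $\emptyset$). Fix a total order on $V$; for $X=\{x_0<\dots<x_k\}$, $X_{x_i}=X\setminus\{x_i\}$, $\langle X_{x_i}|X\rangle=(-1)^i$. The (augmented) flag chain complex $C^f_*(\Gamma)$ over $\mathbb{K}$ has basis $c_X$ of $C^f_k$ the simplices with $k+1$ vertices and $\partial_k c_X=\sum_{v\in X}\langle X_v|X\rangle c_{X_v}$; $M_{k+1}$ is the matrix of $\partial_{k+1}$ in these bases (entry $\langle Y|X\rangle$ if $Y\subset X$, $0$ otherwise). $m_v=\chi(g_v)$; for an edge $e=\{v,w\}$, $m_e=m_v+m_w$. $\chi$ is $\mathbb{K}$ non-resonant if $m_v\neq0$ for all $v\in V$ and there is no edge $e$ with $m_e=0$ and $\tilde\ell(e)\cdot1_{\mathbb{K}}=0$. Put $q_n(x)=(x^n-1)/(x-1)$. For a simplex $X$: $\mathbf{p}_X=\prod_{v\in X}(t^{m_v}-1)$, $\mathbf{q}_X=\prod_{e\subseteq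 X,\,e\in E}q_{\tilde\ell(e)}(t^{m_e})$; for a list $\bar X=(X_1,\dots,X_r)$, $\mathbf{p}_{\bar X}=\prod_i\mathbf{p}_{X_i}$, $\mathbf{q}_{\bar X}=\prod_i\mathbf{q}_{X_i}$. Equivariant complex: $C^\chi_k(\Gamma)$ is free over $\mathbb{K}[t^{\pm1}]$ with basis $\sigma^\chi_X$, $X$ simplex with $k+1$ vertices, and $\partial^\chi_k\sigma^\chi_X=\sum_{v\in X}\langle X_v|X\rangle(t^{m_v}-1)\big[\prod_{w\in X_v}q_{\tilde\ell(\{v,w\})}(t^{m_v+m_w})\big]\sigma^\chi_{X_v}$. $M^\chi_{k+1}(t)$ is the matrix of $\partial^\chi_{k+1}$ in these bases. Acyclic pairs: for $\bar X,\bar Y$ as in the claim, let $N(\bar X)$ be the subcomplex of $\mathcal{F}^f(\Gamma)$ consisting of all simplices with at most $k+1$ vertices together with the simplices in $\bar X$, and $N(\bar Y^c)$ the subcomplex of all simplices with at most $k$ vertices together with the simplices with $k+1$ vertices not in $\bar Y$. $(\bar X,\bar Y)$ is acyclic of order $r$ if $|\bar X|=|\bar Y|=r$ and the pair $(N(\bar X),N(\bar Y^c))$ is acyclic, i.e. $H_*(N(\bar X),N(\bar Y^c);\mathbb{K})=0$. *)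

theory Defs
  imports "HOL-Computational_Algebra.Formal_Laurent_Series" "HOL-Library.Function_Algebras" "Jordan_Normal_Form.Determinant"
begin

text \<open>A finite labelled simplicial graph: a finite vertex set V (vertex type carries
the fixed total order), an edge set E of 2-element subsets of V, and the
half-labels lt e (so the label is l(e) = 2 * lt e), with lt e \<ge> 1.\<close>

definition labelled_graph :: "'v set \<Rightarrow> 'v set set \<Rightarrow> ('v set \<Rightarrow> nat) \<Rightarrow> bool" where
  "labelled_graph V E lt \<longleftrightarrow> finite V \<and>
     (\<forall>e\<in>E. \<exists>v w. v \<in> V \<and> w \<in> V \<and> v \<noteq> w \<and> e = {v, w}) \<and>
     (\<forall>e\<in>E. lt e \<ge> 1)"

definition clique :: "'v set \<Rightarrow> 'v set set \<Rightarrow> 'v set \<Rightarrow> bool" where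
  "clique V E X \<longleftrightarrow> X \<subseteq> V \<and> (\<forall>v\<in>X. \<forall>w\<in>X. v \<noteq> w \<longrightarrow> {v, w} \<in> E)"

text \<open>Word equivalence in the Coxeter group W_X on generators X with
relations s^2 = 1 and (s t)^(mm s t) = 1 (monoid presentation; valid since
every generator is an involution).\<close>

inductive cox_eq :: "'v set \<Rightarrow> ('v \<Rightarrow> 'v \<Rightarrow> nat) \<Rightarrow> 'v list \<Rightarrow> 'v list \<Rightarrow> bool"
  for X mm where
  refl: "cox_eq X mm w w"
| sym: "cox_eq X mm u w \<Longrightarrow> cox_eq X mm w u"
| trans: "cox_eq X mm u v \<Longrightarrow> cox_eq X mm v w \<Longrightarrow> cox_eq X mm u w"
| sq: "s \<in> X \<Longrightarrow> cox_eq X mm (a @ [s, s] @ b) (a @ b)"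
| braid: "s \<in> X \<Longrightarrow> t \<in> X \<Longrightarrow> s \<noteq> t \<Longrightarrow>
          cox_eq X mm (a @ concat (replicate (mm s t) [s, t]) @ b) (a @ b)"

definition coxeter_finite :: "('v set \<Rightarrow> nat) \<Rightarrow> 'v set \<Rightarrow> bool" where
  "coxeter_finite lt X \<longleftrightarrow>
     finite (lists X // {(u, w). u \<in> lists X \<and> w \<in> lists X \<and>
                                 cox_eq X (\<lambda>s t. 2 * lt {s, t}) u w})"

definition FC_type :: "'v set \<Rightarrow> 'v set set \<Rightarrow> ('v set \<Rightarrow> nat) \<Rightarrow> bool" where
  "FC_type V E lt \<longleftrightarrow> (\<forall>X. clique V E X \<longrightarrow> coxeter_finite lt X)"

text \<open>Simplices of F^f(Gamma) (including the empty simplex).\<close>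

definition simplex :: "'v set \<Rightarrow> 'v set set \<Rightarrow> ('v set \<Rightarrow> nat) \<Rightarrow> 'v set \<Rightarrow> bool" where
  "simplex V E lt X \<longleftrightarrow> clique V E X \<and> coxeter_finite lt X"

text \<open>A homomorphism chi : A_Gamma \<rightarrow> Z is given by its values m v = chi(g_v)
(every assignment extends, since Z is abelian and the Artin relations
become trivial there).\<close>

definition chi_word :: "('v \<Rightarrow> int) \<Rightarrow> ('v \<times> bool) list \<Rightarrow> int" where
  "chi_word m w = sum_list (map (\<lambda>(v, b). if b then m v else - m v) w)"

definition chi_surjective :: "'v set \<Rightarrow> ('v \<Rightarrow> int) \<Rightarrow> bool" where
  "chi_surjective V m \<longleftrightarrow> chi_word m ` lists (V \<times> UNIV) = UNIV"

definition non_resonant :: "'k::field itself \<Rightarrow> 'v set \<Rightarrow> 'v set set \<Rightarrow> ('v set \<Rightarrow> nat) \<Rightarrow> ('v \<Rightarrow> int) \<Rightarrow> bool"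
  where
  "non_resonant TYPE('k) V E lt m \<longleftrightarrow>
     (\<forall>v\<in>V. m v \<noteq> 0) \<and>
     \<not> (\<exists>e\<in>E. (\<Sum>v\<in>e. m v) = 0 \<and> (of_nat (lt e) :: 'k) = 0)"

definition tpow :: "int \<Rightarrow> 'k::field fls" where
  "tpow i = fls_X_intpow i"

text \<open>q_n(x) = (x^n - 1)/(x - 1) as a polynomial, i.e. 1 + x + ... + x^(n-1).\<close>
definition qpoly :: "nat \<Rightarrow> 'a::comm_ring_1 \<Rightarrow> 'a" where
  "qpoly n x = (\<Sum>i<n. x ^ i)"

definition pX :: "('v \<Rightarrow> int) \<Rightarrow> 'v set \<Rightarrow> 'k::field fls" where
  "pX m X = (\<Prod>v\<in>X. tpow (m v) - 1)"

definition qX :: "'v set set \<Rightarrow> ('v set \<Rightarrow> nat) \<Rightarrow> ('v \<Rightarrow> int) \<Rightarrow> 'v set \<Rightarrow> 'k::field fls" where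
  "qX E lt m X = (\<Prod>e\<in>{e\<in>E. e \<subseteq> X}. qpoly (lt e) (tpow (\<Sum>v\<in>e. m v)))"

definition pL :: "('v \<Rightarrow> int) \<Rightarrow> 'v set list \<Rightarrow> 'k::field fls" where
  "pL m Xs = prod_list (map (pX m) Xs)"

definition qL :: "'v set set \<Rightarrow> ('v set \<Rightarrow> nat) \<Rightarrow> ('v \<Rightarrow> int) \<Rightarrow> 'v set list \<Rightarrow> 'k::field fls" where
  "qL E lt m Xs = prod_list (map (qX E lt m) Xs)"

text \<open>incidence Y X = <Y|X> = (-1)^i if Y = X minus its i-th smallest vertex
(counting from 0), and 0 otherwise.\<close>
definition incidence :: "'v::linorder set \<Rightarrow> 'v set \<Rightarrow> int" where
  "incidence Y X = (if Y \<subseteq> X \<and> card X = card Y + 1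
      then (-1) ^ card {x\<in>X. x < the_elem (X - Y)} else 0)"

definition chi_entry :: "('v set \<Rightarrow> nat) \<Rightarrow> ('v \<Rightarrow> int) \<Rightarrow> 'v::linorder set \<Rightarrow> 'v set \<Rightarrow> 'k::field fls" where
  "chi_entry lt m X Y = (if Y \<subseteq> X \<and> card X = card Y + 1 then
      (let v = the_elem (X - Y) in
        of_int (incidence Y X) * (tpow (m v) - 1) *
        (\<Prod>w\<in>Y. qpoly (lt {v, w}) (tpow (m v + m w))))
      else 0)"

definition minor_chi :: "('v set \<Rightarrow> nat) \<Rightarrow> ('v \<Rightarrow> int) \<Rightarrow> 'v::linorder set list \<Rightarrow> 'v set list \<Rightarrow> 'k::field fls" where
  "minor_chi lt m Xs Ys =
     det (mat (length Xs) (length Ys) (\<lambda>(i, j). chi_entry lt m (Xs ! i) (Ys ! j)))"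

definition minor_flag :: "'v::linorder set list \<Rightarrow> 'v set list \<Rightarrow> 'k::field" where
  "minor_flag Xs Ys =
     det (mat (length Xs) (length Ys) (\<lambda>(i, j). of_int (incidence (Ys ! j) (Xs ! i))))"

text \<open>For complexes L \<subseteq> N (sets of finite vertex sets, augmented: the empty
simplex counts), relative chains with d vertices are K-valued functions supported on
simplices of N - L with d vertices; rel_bd is the simplicial boundary.\<close>

definition rel_chains :: "'v set set \<Rightarrow> 'v set set \<Rightarrow> nat \<Rightarrow> ('v set \<Rightarrow> 'k::field) set" where
  "rel_chains N L d = {c. \<forall>\<sigma>. c \<sigma> \<noteq> 0 \<longrightarrow> \<sigma> \<in> N - L \<and> card \<sigma> = d}"

definition rel_bd :: "'v set set \<Rightarrow> 'v set set \<Rightarrow> nat \<Rightarrow> ('v set \<Rightarrow> 'k::field) \<Rightarrow> ('v::linorder set \<Rightarrow> 'k)" where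
  "rel_bd N L d c = (\<lambda>\<tau>. if \<tau> \<in> N - L \<and> card \<tau> + 1 = d then
       (\<Sum>\<sigma>\<in>{\<sigma>\<in>N - L. card \<sigma> = d \<and> \<tau> \<subseteq> \<sigma>}. of_int (incidence \<tau> \<sigma>) * c \<sigma>)
     else 0)"

definition rel_acyclic :: "'k::field itself \<Rightarrow> 'v::linorder set set \<Rightarrow> 'v set set \<Rightarrow> bool" where
  "rel_acyclic TYPE('k) N L \<longleftrightarrow>
     (\<forall>d. \<forall>c \<in> (rel_chains N L d :: ('v set \<Rightarrow> 'k) set). rel_bd N L d c = (\<lambda>_. 0) \<longrightarrow>
        (\<exists>b \<in> rel_chains N L (Suc d). rel_bd N L (Suc d) b = c))"

text \<open>N(Xs): simplices with at most k+1 vertices, plus those in Xs.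
N(Ys^c): simplices with at most k vertices, plus those with k+1 vertices not in Ys.
Here the number n = k+1 is used.\<close>
definition N_X :: "'v set \<Rightarrow> 'v set set \<Rightarrow> ('v set \<Rightarrow> nat) \<Rightarrow> nat \<Rightarrow> 'v set list \<Rightarrow> 'v set set" where
  "N_X V E lt n Xs = {\<sigma>. simplex V E lt \<sigma> \<and> (card \<sigma> \<le> n \<or> \<sigma> \<in> set Xs)}"

definition N_Yc :: "'v set \<Rightarrow> 'v set set \<Rightarrow> ('v set \<Rightarrow> nat) \<Rightarrow> nat \<Rightarrow> 'v set list \<Rightarrow> 'v set set" where
  "N_Yc V E lt n Ys = {\<sigma>. simplex V E lt \<sigma> \<and> (card \<sigma> < n \<or> (card \<sigma> = n \<and> \<sigma> \<notin> set Ys))}"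

definition acyclic_pair :: "'k::field itself \<Rightarrow> 'v set \<Rightarrow> 'v set set \<Rightarrow> ('v set \<Rightarrow> nat) \<Rightarrow> nat \<Rightarrow>
    'v::linorder set list \<Rightarrow> 'v set list \<Rightarrow> nat \<Rightarrow> bool" where
  "acyclic_pair TYPE('k) V E lt n Xs Ys r \<longleftrightarrow>
     length Xs = r \<and> length Ys = r \<and> rel_acyclic TYPE('k) (N_X V E lt n Xs) (N_Yc V E lt n Ys)"

definition flag_chains :: "'v set \<Rightarrow> 'v set set \<Rightarrow> ('v set \<Rightarrow> nat) \<Rightarrow> nat \<Rightarrow> ('v set \<Rightarrow> 'k::field) set" where
  "flag_chains V E lt d = {c. \<forall>\<sigma>. c \<sigma> \<noteq> 0 \<longrightarrow> simplex V E lt \<sigma> \<and> card \<sigma> = d}"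

definition flag_bd :: "'v set \<Rightarrow> 'v set set \<Rightarrow> ('v set \<Rightarrow> nat) \<Rightarrow> nat \<Rightarrow> ('v set \<Rightarrow> 'k::field) \<Rightarrow> ('v::linorder set \<Rightarrow> 'k)" where
  "flag_bd V E lt d c = rel_bd (Collect (simplex V E lt)) {} d c"

definition fun_scale :: "'k::field \<Rightarrow> ('a \<Rightarrow> 'k) \<Rightarrow> ('a \<Rightarrow> 'k)" where
  "fun_scale a f = (\<lambda>x. a * f x)"

definition rank_bd :: "'k::field itself \<Rightarrow> 'v::linorder set \<Rightarrow> 'v set set \<Rightarrow> ('v set \<Rightarrow> nat) \<Rightarrow> nat \<Rightarrow> nat" where
  "rank_bd TYPE('k) V E lt d =
     vector_space.dim (fun_scale :: 'k \<Rightarrow> _)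
       (flag_bd V E lt d ` (flag_chains V E lt d :: ('v set \<Rightarrow> 'k) set))"

end

(* Write w(Z) = p_Z q_Z for a simplex Z. If X = Y + {v}, the entry of M^chi at (X, Y) is
   <Y|X> (t^(m_v) - 1) prod_(w in Y) q(t^(m_v + m_w)), and the factor after <Y|X> is exactly
   w(X) / w(Y). So M^chi is the flag matrix M conjugated by diagonal matrices of weights, which
   gives (i); non-resonance makes every weight nonzero, so a chi-minor vanishes iff the flag
   minor does. The pair (N(X), N(Y^c)) has relative chains only on the simplices of X and Y, and
   its single boundary map is the transposed flag minor; hence it is acyclic iff that minor is
   invertible, which is (ii). For (iii), the largest nonsingular minor of a matrix has the size of
   its row rank (by Laplace expansion), and the rows of M span the image of the boundary. *)

theory Submission
  imports Defs
begin

section \<open>Weights of simplices\<close>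

lemma tpow_minus_one_nonzero:
  assumes "i \<noteq> 0"
  shows "tpow i - 1 \<noteq> (0 :: 'k::field fls)"
proof
  assume "tpow i - 1 = (0 :: 'k fls)"
  then have "fls_nth (tpow i - 1 :: 'k fls) 0 = 0" by simp
  then show False using assms by (simp add: tpow_def)
qed

lemma qpoly_tpow_nonzero:
  assumes "l \<ge> 1" and "s \<noteq> 0 \<or> (of_nat l :: 'k) \<noteq> 0"
  shows "qpoly l (tpow s :: 'k::field fls) \<noteq> 0"
proof
  assume zero: "qpoly l (tpow s :: 'k fls) = 0"
  have "fls_nth (qpoly l (tpow s :: 'k fls)) 0 = (\<Sum>i<l. if int i * s = 0 then 1 else 0)"
    unfolding qpoly_def tpow_def fls_nth_sum fls_X_intpow_power by (intro sum.cong) auto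
  also have "\<dots> = (if s = 0 then of_nat l else (\<Sum>i<l. if i = 0 then 1 else 0))"
    by (auto intro: sum.cong)
  also have "\<dots> = (if s = 0 then of_nat l else 1)"
    using assms(1) by simp
  finally show False using zero assms(2) by (auto split: if_splits)
qed

lemma simplex_finite: "labelled_graph V E lt \<Longrightarrow> simplex V E lt X \<Longrightarrow> finite X"
  unfolding labelled_graph_def simplex_def clique_def by (blast intro: finite_subset)

lemma simplex_subset_vertices: "simplex V E lt X \<Longrightarrow> X \<subseteq> V"
  unfolding simplex_def clique_def by blast

lemma finite_simplices_of_card:
  assumes "labelled_graph V E lt"
  shows "finite {\<sigma>. simplex V E lt \<sigma> \<and> card \<sigma> = d}"
proof (rule finite_subset)
  show "{\<sigma>. simplex V E lt \<sigma> \<and> card \<sigma> = d} \<subseteq> Pow V" using simplex_subset_vertices by blast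
  show "finite (Pow V)" using assms unfolding labelled_graph_def by simp
qed

lemma labelled_graph_edgeE:
  assumes "labelled_graph V E lt" and "e \<in> E"
  obtains v w where "v \<noteq> w" and "e = {v, w}"
  using assms unfolding labelled_graph_def by metis

lemma edges_within_insert:
  assumes "labelled_graph V E lt" and "v \<notin> Y" and "clique V E (insert v Y)"
  shows "{e\<in>E. e \<subseteq> insert v Y} = {e\<in>E. e \<subseteq> Y} \<union> (\<lambda>w. {v, w}) ` Y"
proof -
  have "e \<in> {e\<in>E. e \<subseteq> Y} \<union> (\<lambda>w. {v, w}) ` Y" if "e \<in> E" "e \<subseteq> insert v Y" for e
  proof -
    obtain a b where "a \<noteq> b" "e = {a, b}"
      using labelled_graph_edgeE[OF assms(1) \<open>e \<in> E\<close>] .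
    show ?thesis
    proof (cases "e \<subseteq> Y")
      case False
      then have "v \<in> e" using that(2) by blast
      then obtain w where "e = {v, w}" "w \<noteq> v" using \<open>e = {a, b}\<close> \<open>a \<noteq> b\<close> by blast
      then show ?thesis using that(2) by blast
    qed (use that in blast)
  qed
  moreover have "{v, w} \<in> E" if "w \<in> Y" for w
  proof -
    have "v \<noteq> w" using assms(2) that by blast
    then show ?thesis using assms(3) that unfolding clique_def by simp
  qed
  ultimately show ?thesis by auto
qed

lemma qX_insert:
  assumes "labelled_graph V E lt" and "finite Y" "v \<notin> Y" "clique V E (insert v Y)"
  shows "(qX E lt m (insert v Y) :: 'k::field fls) =
     qX E lt m Y * (\<Prod>w\<in>Y. qpoly (lt {v, w}) (tpow (m v + m w)))"
proof -
  have "finite {e\<in>E. e \<subseteq> Y}" using \<open>finite Y\<close> by (auto intro: finite_subset[of _ "Pow Y"])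
  moreover have "{e\<in>E. e \<subseteq> Y} \<inter> (\<lambda>w. {v, w}) ` Y = {}" using \<open>v \<notin> Y\<close> by auto
  moreover have "inj_on (\<lambda>w. {v, w}) Y" using \<open>v \<notin> Y\<close> by (auto simp: inj_on_def doubleton_eq_iff)
  moreover have "sum m {v, w} = m v + m w" if "w \<in> Y" for w
  proof -
    have "v \<noteq> w" using that \<open>v \<notin> Y\<close> by blast
    then show ?thesis by simp
  qed
  ultimately show ?thesis
    unfolding qX_def edges_within_insert[OF assms(1,3,4)] using \<open>finite Y\<close>
    by (simp add: prod.union_disjoint prod.reindex)
qed

definition simplex_weight :: "'v set set \<Rightarrow> ('v set \<Rightarrow> nat) \<Rightarrow> ('v \<Rightarrow> int) \<Rightarrow> 'v set \<Rightarrow> 'k::field fls"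
  where "simplex_weight E lt m Z = pX m Z * qX E lt m Z"

lemma simplex_weight_nonzero:
  assumes G: "labelled_graph V E lt" and NR: "non_resonant TYPE('k::field) V E lt m"
    and S: "simplex V E lt Z"
  shows "(simplex_weight E lt m Z :: 'k fls) \<noteq> 0"
proof -
  have "finite Z" using simplex_finite[OF G S] .
  have "finite {e\<in>E. e \<subseteq> Z}" using \<open>finite Z\<close> by (auto intro: finite_subset[of _ "Pow Z"])
  moreover have "qpoly (lt e) (tpow (sum m e)) \<noteq> (0 :: 'k fls)" if "e \<in> E" for e
    using G NR that by (intro qpoly_tpow_nonzero) (auto simp: labelled_graph_def non_resonant_def)
  ultimately have "(qX E lt m Z :: 'k fls) \<noteq> 0"
    unfolding qX_def by (simp add: prod_zero_iff)
  moreover have "(pX m Z :: 'k fls) \<noteq> 0"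
    using NR simplex_subset_vertices[OF S] \<open>finite Z\<close> tpow_minus_one_nonzero
    unfolding pX_def non_resonant_def by auto
  ultimately show ?thesis unfolding simplex_weight_def by simp
qed

lemma chi_entry_eq_weight_ratio:
  assumes G: "labelled_graph V E lt" and SX: "simplex V E lt X" and SY: "simplex V E lt Y"
    and card: "card X = card Y + 1" and nz: "(simplex_weight E lt m Y :: 'k::field fls) \<noteq> 0"
  shows "(chi_entry lt m X Y :: 'k fls) =
    of_int (incidence Y X) * (simplex_weight E lt m X / simplex_weight E lt m Y)"
proof (cases "Y \<subseteq> X")
  case False
  then show ?thesis unfolding chi_entry_def incidence_def by simp
next
  case True
  have "finite Y" using simplex_finite[OF G SY] .
  then have "card (X - Y) = 1" using True card by (simp add: card_Diff_subset)
  then obtain v where v: "X - Y = {v}" by (auto simp: card_Suc_eq)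
  then have "v \<notin> Y" and X: "X = insert v Y" using True by auto
  then have "clique V E (insert v Y)" using SX by (simp add: simplex_def)
  define P :: "'k fls" where "P = (\<Prod>w\<in>Y. qpoly (lt {v, w}) (tpow (m v + m w)))"
  have "simplex_weight E lt m X = simplex_weight E lt m Y * ((tpow (m v) - 1) * P)"
    using \<open>finite Y\<close> \<open>v \<notin> Y\<close>
    unfolding simplex_weight_def X pX_def qX_insert[OF G \<open>finite Y\<close> \<open>v \<notin> Y\<close> \<open>clique V E (insert v Y)\<close>] P_def
    by (simp add: mult_ac)
  moreover have "chi_entry lt m X Y = of_int (incidence Y X) * ((tpow (m v) - 1) * P)"
    unfolding chi_entry_def using True card v by (simp add: P_def mult.assoc)
  ultimately show ?thesis using nz by simp
qed

lemma pL_mult_qL: "pL m Xs * qL E lt m Xs = (prod_list (map (simplex_weight E lt m) Xs) :: 'k::field fls)"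
  by (induct Xs) (simp_all add: pL_def qL_def simplex_weight_def mult_ac)

lemma prod_list_simplex_weight_nonzero:
  assumes "labelled_graph V E lt" and "non_resonant TYPE('k::field) V E lt m"
    and "\<forall>X\<in>set Xs. simplex V E lt X"
  shows "(prod_list (map (simplex_weight E lt m) Xs) :: 'k fls) \<noteq> 0"
  using simplex_weight_nonzero[OF assms(1,2)] assms(3) by (auto simp: prod_list_zero_iff)

definition minor_mat :: "('r \<Rightarrow> 'c \<Rightarrow> 'a) \<Rightarrow> 'r list \<Rightarrow> 'c list \<Rightarrow> 'a mat"
  where "minor_mat f xs ys = mat (length xs) (length ys) (\<lambda>(i, j). f (xs ! i) (ys ! j))"

lemma dim_minor_mat [simp]:
  "dim_row (minor_mat f xs ys) = length xs" "dim_col (minor_mat f xs ys) = length ys"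
  by (simp_all add: minor_mat_def)

lemma minor_mat_carrier [simp]: "minor_mat f xs ys \<in> carrier_mat (length xs) (length ys)"
  by (simp add: carrier_matI)

lemma minor_mat_index [simp]:
  "i < length xs \<Longrightarrow> j < length ys \<Longrightarrow> minor_mat f xs ys $$ (i, j) = f (xs ! i) (ys ! j)"
  by (simp add: minor_mat_def)

lemma minor_mat_cong:
  "(\<And>x y. x \<in> set xs \<Longrightarrow> y \<in> set ys \<Longrightarrow> f x y = g x y) \<Longrightarrow> minor_mat f xs ys = minor_mat g xs ys"
  unfolding minor_mat_def by (rule cong_mat) auto

lemma det_minor_mat_scaled:
  fixes g :: "'r \<Rightarrow> 'c \<Rightarrow> 'a::field"
  assumes "length ys = length xs"
  shows "det (minor_mat (\<lambda>x y. g x y * (a x / b y)) xs ys) =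
    prod_list (map a xs) / prod_list (map b ys) * det (minor_mat g xs ys)"
proof -
  define r where "r = length xs"
  have carrier: "minor_mat h xs ys \<in> carrier_mat r r" for h :: "'r \<Rightarrow> 'c \<Rightarrow> 'a"
    using assms by (simp add: r_def minor_mat_def)
  have prod_ys: "(\<Prod>i<r. b (ys ! p i)) = prod_list (map b ys)" if "p permutes {..<r}" for p
    using prod.permute[OF that, of "\<lambda>i. b (ys ! i)"] assms
    by (simp add: r_def prod.list_conv_set_nth atLeast0LessThan comp_def)
  have prod_xs: "(\<Prod>i<r. a (xs ! i)) = prod_list (map a xs)"
    by (simp add: r_def prod.list_conv_set_nth atLeast0LessThan)
  have "det (minor_mat (\<lambda>x y. g x y * (a x / b y)) xs ys) =
      (\<Sum>p | p permutes {..<r}. signof p * (\<Prod>i<r. g (xs ! i) (ys ! p i) * (a (xs ! i) / b (ys ! p i))))"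
    using assms by (subst det_def'[OF carrier]) (auto simp: r_def atLeast0LessThan intro!: sum.cong prod.cong)
  also have "\<dots> = (\<Sum>p | p permutes {..<r}. prod_list (map a xs) / prod_list (map b ys) *
      (signof p * (\<Prod>i<r. g (xs ! i) (ys ! p i))))"
    using prod_xs prod_ys by (intro sum.cong) (simp_all add: prod.distrib prod_dividef)
  also have "\<dots> = prod_list (map a xs) / prod_list (map b ys) * det (minor_mat g xs ys)"
    using assms by (subst det_def'[OF carrier]) (auto simp: r_def atLeast0LessThan sum_distrib_left intro!: sum.cong prod.cong)
  finally show ?thesis .
qed

lemma transpose_minor_mat_mult_vec_nth:
  assumes "j < length ys" and "v \<in> carrier_vec (length xs)"
  shows "(transpose_mat (minor_mat f xs ys) *\<^sub>v v) $ j = (\<Sum>i<length xs. f (xs ! i) (ys ! j) * v $ i)"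
proof -
  have "(transpose_mat (minor_mat f xs ys) *\<^sub>v v) $ j = (\<Sum>i<length xs. col (minor_mat f xs ys) j $ i * v $ i)"
    using assms by (simp add: scalar_prod_def atLeast0LessThan)
  also have "\<dots> = (\<Sum>i<length xs. f (xs ! i) (ys ! j) * v $ i)"
    using assms(1) by (intro sum.cong) simp_all
  finally show ?thesis .
qed

lemma det_minor_mat_eq_zero_iff:
  fixes f :: "'r \<Rightarrow> 'c \<Rightarrow> 'a::idom"
  assumes "length ys = length xs"
  shows "det (minor_mat f xs ys) = 0 \<longleftrightarrow> (\<exists>v \<in> carrier_vec (length xs).
    v \<noteq> 0\<^sub>v (length xs) \<and> transpose_mat (minor_mat f xs ys) *\<^sub>v v = 0\<^sub>v (length xs))"
proof -
  have M: "minor_mat f xs ys \<in> carrier_mat (length xs) (length xs)"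
    using minor_mat_carrier[of f xs ys] unfolding assms .
  then have "transpose_mat (minor_mat f xs ys) \<in> carrier_mat (length xs) (length xs)" by simp
  from det_0_iff_vec_prod_zero[OF this] show ?thesis
    unfolding det_transpose[OF M] by blast
qed

lemma mat_delete_minor_mat_first_col:
  assumes "i < length xs"
  shows "mat_delete (minor_mat f xs (y # ys)) i 0 = minor_mat f (take i xs @ drop (Suc i) xs) ys"
  using assms by (intro eq_matI) (auto simp: mat_delete_def nth_append min_def)

lemma det_minor_mat_first_col_expansion:
  assumes "length xs = Suc (length ys)"
  shows "det (minor_mat f xs (y # ys)) =
    (\<Sum>i<length xs. f (xs ! i) y * ((-1) ^ i * det (minor_mat f (take i xs @ drop (Suc i) xs) ys)))"
proof -
  have "minor_mat f xs (y # ys) \<in> carrier_mat (length xs) (length xs)"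
    using minor_mat_carrier[of f xs "y # ys"] assms by simp
  then have "det (minor_mat f xs (y # ys)) =
      (\<Sum>i<length xs. minor_mat f xs (y # ys) $$ (i, 0) * cofactor (minor_mat f xs (y # ys)) i 0)"
    using assms by (intro laplace_expansion_column) simp_all
  also have "\<dots> = (\<Sum>i<length xs. f (xs ! i) y * ((-1) ^ i * det (minor_mat f (take i xs @ drop (Suc i) xs) ys)))"
    by (intro sum.cong) (simp_all add: cofactor_def mat_delete_minor_mat_first_col)
  finally show ?thesis .
qed

lemma det_minor_mat_repeated_col:
  assumes "length xs = Suc (length ys)" and "y \<in> set ys"
  shows "det (minor_mat f xs (y # ys)) = 0"
proof -
  obtain j where j: "j < length ys" "y = ys ! j" using assms(2) by (auto simp: in_set_conv_nth)
  have "minor_mat f xs (y # ys) \<in> carrier_mat (length xs) (length xs)"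
    using minor_mat_carrier[of f xs "y # ys"] assms(1) by simp
  moreover have "col (minor_mat f xs (y # ys)) 0 = col (minor_mat f xs (y # ys)) (Suc j)"
    using j by (intro eq_vecI) simp_all
  ultimately show ?thesis using j assms(1) by (intro det_identical_columns[of _ "length xs" 0 "Suc j"]) simp_all
qed

lemma det_minor_mat_Nil: "det (minor_mat f [] []) = 1"
proof -
  have "minor_mat f [] [] = 1\<^sub>m 0" by (rule eq_matI) simp_all
  then show ?thesis by simp
qed

lemma minor_flag_eq_det: "minor_flag Xs Ys = det (minor_mat (\<lambda>X Y. of_int (incidence Y X)) Xs Ys)"
  by (simp add: minor_flag_def minor_mat_def)

lemma minor_chi_eq_det: "minor_chi lt m Xs Ys = det (minor_mat (chi_entry lt m) Xs Ys)"
  by (simp add: minor_chi_def minor_mat_def)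

interpretation fls_const_hom: comm_ring_hom "fls_const :: 'k::field \<Rightarrow> 'k fls"
  by unfold_locales (simp_all add: fls_plus_const)

lemma minor_chi_eq_weight_ratio_minor_flag:
  fixes Xs Ys :: "'v::linorder set list"
  assumes G: "labelled_graph V E lt" and NR: "non_resonant TYPE('k::field) V E lt m"
    and SX: "\<forall>X\<in>set Xs. simplex V E lt X \<and> card X = n + 1"
    and SY: "\<forall>Y\<in>set Ys. simplex V E lt Y \<and> card Y = n"
    and len: "length Ys = length Xs"
  shows "(minor_chi lt m Xs Ys :: 'k fls) =
           (pL m Xs * qL E lt m Xs) / (pL m Ys * qL E lt m Ys) * fls_const (minor_flag Xs Ys)"
proof -
  let ?w = "simplex_weight E lt m :: 'v set \<Rightarrow> 'k fls"
  have "minor_chi lt m Xs Ys = det (minor_mat (\<lambda>X Y. of_int (incidence Y X) * (?w X / ?w Y)) Xs Ys)"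
    unfolding minor_chi_eq_det using SX SY
    by (intro arg_cong[where f = det] minor_mat_cong chi_entry_eq_weight_ratio[OF G]
        simplex_weight_nonzero[OF G NR]) auto
  also have "\<dots> = prod_list (map ?w Xs) / prod_list (map ?w Ys) *
      det (minor_mat (\<lambda>X Y. of_int (incidence Y X)) Xs Ys)"
    by (rule det_minor_mat_scaled[OF len])
  also have "(minor_mat (\<lambda>X Y. of_int (incidence Y X)) Xs Ys :: 'k fls mat) =
      map_mat fls_const (minor_mat (\<lambda>X Y. of_int (incidence Y X)) Xs Ys)"
    by (rule eq_matI) (simp_all add: fls_const_hom.hom_of_int)
  also have "det \<dots> = fls_const (minor_flag Xs Ys)"
    unfolding minor_flag_eq_det by (rule fls_const_hom.hom_det)
  finally show ?thesis
    unfolding pL_mult_qL .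
qed

lemma minor_chi_nonzero_iff_minor_flag_nonzero:
  fixes Xs Ys :: "'v::linorder set list"
  assumes G: "labelled_graph V E lt" and NR: "non_resonant TYPE('k::field) V E lt m"
    and SX: "\<forall>X\<in>set Xs. simplex V E lt X \<and> card X = n + 1"
    and SY: "\<forall>Y\<in>set Ys. simplex V E lt Y \<and> card Y = n"
    and len: "length Ys = length Xs"
  shows "(minor_chi lt m Xs Ys :: 'k fls) \<noteq> 0 \<longleftrightarrow> (minor_flag Xs Ys :: 'k) \<noteq> 0"
  unfolding minor_chi_eq_weight_ratio_minor_flag[OF G NR SX SY len] pL_mult_qL
  using prod_list_simplex_weight_nonzero[OF G NR] SX SY by simp

section \<open>Two-term relative complexes\<close>

lemma sum_set_conv_nth: "distinct xs \<Longrightarrow> sum g (set xs) = (\<Sum>i<length xs. g (xs ! i))"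
  by (simp add: sum.distinct_set_conv_list sum_list_sum_nth atLeast0LessThan)

lemma rel_bd_zero [simp]: "rel_bd N L d (\<lambda>_. 0) = (\<lambda>_. 0 :: 'k::field)"
  by (simp add: rel_bd_def fun_eq_iff)

lemma zero_in_rel_chains [simp]: "(\<lambda>_. 0) \<in> rel_chains N L d"
  by (simp add: rel_chains_def)

text \<open>Chains supported on a list of distinct simplices are identified with coordinate vectors.\<close>

definition vec_chain :: "'a list \<Rightarrow> 'k::zero vec \<Rightarrow> 'a \<Rightarrow> 'k"
  where "vec_chain xs v \<sigma> = (case map_of (zip xs (list_of_vec v)) \<sigma> of None \<Rightarrow> 0 | Some a \<Rightarrow> a)"

lemma vec_chain_nth:
  "distinct xs \<Longrightarrow> v \<in> carrier_vec (length xs) \<Longrightarrow> i < length xs \<Longrightarrow> vec_chain xs v (xs ! i) = v $ i"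
  by (simp add: vec_chain_def map_of_zip_nth)

lemma vec_chain_outside:
  assumes "v \<in> carrier_vec (length xs)" and "\<sigma> \<notin> set xs"
  shows "vec_chain xs v \<sigma> = 0"
proof -
  have "map_of (zip xs (list_of_vec v)) \<sigma> = None"
    using assms by (simp add: map_of_zip_is_None carrier_vecD)
  then show ?thesis by (simp add: vec_chain_def)
qed

definition chain_vec :: "'a list \<Rightarrow> ('a \<Rightarrow> 'k) \<Rightarrow> 'k vec"
  where "chain_vec xs c = vec (length xs) (\<lambda>i. c (xs ! i))"

lemma chain_vec_carrier [simp]: "chain_vec xs c \<in> carrier_vec (length xs)"
  by (simp add: chain_vec_def)

lemma chain_vec_vec_chain:
  "distinct xs \<Longrightarrow> v \<in> carrier_vec (length xs) \<Longrightarrow> chain_vec xs (vec_chain xs v) = v"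
  by (rule eq_vecI) (simp_all add: chain_vec_def vec_chain_nth)

definition boundary_mat :: "'v set list \<Rightarrow> 'v::linorder set list \<Rightarrow> 'k::comm_ring_1 mat"
  where "boundary_mat Xs Ys = transpose_mat (minor_mat (\<lambda>X Y. of_int (incidence Y X)) Xs Ys)"

lemma dim_boundary_mat [simp]:
  "dim_row (boundary_mat Xs Ys) = length Ys" "dim_col (boundary_mat Xs Ys) = length Xs"
  by (simp_all add: boundary_mat_def)

lemma boundary_mat_carrier: "boundary_mat Xs Ys \<in> carrier_mat (length Ys) (length Xs)"
  by (simp add: carrier_matI)

lemma det_boundary_mat:
  assumes "length Ys = length Xs"
  shows "det (boundary_mat Xs Ys) = minor_flag Xs Ys"
proof -
  have "minor_mat (\<lambda>X Y. of_int (incidence Y X)) Xs Ys \<in> carrier_mat (length Xs) (length Xs)"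
    using minor_mat_carrier[of "\<lambda>X Y. of_int (incidence Y X)" Xs Ys] unfolding assms .
  then show ?thesis unfolding boundary_mat_def minor_flag_eq_det by (rule det_transpose)
qed

lemma minor_flag_nonzero_iff_kernel_trivial:
  assumes "length Ys = length Xs"
  shows "(minor_flag Xs Ys :: 'k::field) \<noteq> 0 \<longleftrightarrow>
    (\<forall>v \<in> carrier_vec (length Xs). (boundary_mat Xs Ys :: 'k mat) *\<^sub>v v = 0\<^sub>v (length Xs) \<longrightarrow> v = 0\<^sub>v (length Xs))"
proof -
  have "(boundary_mat Xs Ys :: 'k mat) \<in> carrier_mat (length Xs) (length Xs)"
    using boundary_mat_carrier[of Xs Ys] unfolding assms .
  from det_0_iff_vec_prod_zero[OF this] show ?thesis
    unfolding det_boundary_mat[OF assms] by auto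
qed

text \<open>The pair \<open>(N(X), N(Y\<^sup>c))\<close> of the paper has this shape.\<close>

locale two_term_pair =
  fixes N L :: "'v::linorder set set" and n :: nat and Xs Ys :: "'v set list"
  assumes relative_simplices: "N - L = set Xs \<union> set Ys"
    and card_Xs: "X \<in> set Xs \<Longrightarrow> card X = n + 1"
    and card_Ys: "Y \<in> set Ys \<Longrightarrow> card Y = n"
    and distinct_Xs: "distinct Xs"
    and length_eq: "length Ys = length Xs"
begin

lemma chain_support:
  assumes "c \<in> rel_chains N L d" and "c \<sigma> \<noteq> 0"
  shows "\<sigma> \<in> set Xs \<and> d = n + 1 \<or> \<sigma> \<in> set Ys \<and> d = n"
  using assms relative_simplices card_Xs card_Ys unfolding rel_chains_def by blast

lemma card_relative_simplex: "\<sigma> \<in> N - L \<Longrightarrow> card \<sigma> = n + 1 \<or> card \<sigma> = n"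
  using relative_simplices card_Xs card_Ys by blast

lemma rel_chains_eq_zero:
  "c \<in> rel_chains N L d \<Longrightarrow> d \<noteq> n \<Longrightarrow> d \<noteq> n + 1 \<Longrightarrow> c = (\<lambda>_. 0)"
  using chain_support by blast

lemma rel_bd_bottom_eq_zero: "rel_bd N L n c = (\<lambda>_. 0 :: 'k::field)"
  using card_relative_simplex by (force simp: rel_bd_def)

lemma rel_bd_above_top_eq_zero: "rel_bd N L (n + 2) c = (\<lambda>_. 0 :: 'k::field)"
proof -
  have empty: "{\<sigma> \<in> N - L. card \<sigma> = n + 2 \<and> \<tau> \<subseteq> \<sigma>} = {}" for \<tau>
    using card_relative_simplex by force
  show ?thesis unfolding rel_bd_def empty by (rule ext) simp
qed

lemma rel_acyclic_iff_bd_bij: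
  "rel_acyclic TYPE('k::field) N L \<longleftrightarrow>
     (\<forall>c \<in> rel_chains N L (n + 1). rel_bd N L (n + 1) c = (\<lambda>_. 0 :: 'k) \<longrightarrow> c = (\<lambda>_. 0)) \<and>
     (\<forall>c \<in> (rel_chains N L n :: ('v set \<Rightarrow> 'k) set).
        \<exists>b \<in> rel_chains N L (n + 1). rel_bd N L (n + 1) b = c)"
  (is "_ \<longleftrightarrow> ?injective \<and> ?surjective")
proof
  assume acyclic: "rel_acyclic TYPE('k) N L"
  show "?injective \<and> ?surjective"
  proof (intro conjI ballI impI)
    fix c :: "'v set \<Rightarrow> 'k"
    assume "c \<in> rel_chains N L (n + 1)" and "rel_bd N L (n + 1) c = (\<lambda>_. 0)"
    then obtain b where "rel_bd N L (n + 2) b = c"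
      using acyclic unfolding rel_acyclic_def by (metis add_Suc_right one_add_one plus_1_eq_Suc)
    then show "c = (\<lambda>_. 0)" using rel_bd_above_top_eq_zero[of b] by simp
  next
    fix c :: "'v set \<Rightarrow> 'k"
    assume "c \<in> rel_chains N L n"
    then show "\<exists>b \<in> rel_chains N L (n + 1). rel_bd N L (n + 1) b = c"
      using acyclic rel_bd_bottom_eq_zero[of c] unfolding rel_acyclic_def by simp
  qed
next
  assume bij: "?injective \<and> ?surjective"
  show "rel_acyclic TYPE('k) N L"
    unfolding rel_acyclic_def
  proof (intro allI ballI impI)
    fix d and c :: "'v set \<Rightarrow> 'k"
    assume c: "c \<in> rel_chains N L d" and "rel_bd N L d c = (\<lambda>_. 0)"
    show "\<exists>b \<in> rel_chains N L (Suc d). rel_bd N L (Suc d) b = c"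
    proof (cases "d = n")
      case True
      then show ?thesis using bij c by simp
    next
      case False
      then have "c = (\<lambda>_. 0)"
        using bij c rel_chains_eq_zero \<open>rel_bd N L d c = (\<lambda>_. 0)\<close> by (cases "d = n + 1") auto
      then show ?thesis using zero_in_rel_chains rel_bd_zero by blast
    qed
  qed
qed

lemma rel_bd_top_nth:
  assumes "j < length Ys"
  shows "rel_bd N L (n + 1) c (Ys ! j) = (boundary_mat Xs Ys *\<^sub>v chain_vec Xs c) $ j"
proof -
  let ?Y = "Ys ! j"
  have "?Y \<in> N - L" and "card ?Y = n" using assms relative_simplices card_Ys by auto
  moreover have "{\<sigma> \<in> N - L. card \<sigma> = n + 1 \<and> ?Y \<subseteq> \<sigma>} = {\<sigma> \<in> set Xs. ?Y \<subseteq> \<sigma>}"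
    using relative_simplices card_Xs card_Ys by force
  ultimately have "rel_bd N L (n + 1) c ?Y = (\<Sum>\<sigma> \<in> {\<sigma> \<in> set Xs. ?Y \<subseteq> \<sigma>}. of_int (incidence ?Y \<sigma>) * c \<sigma>)"
    by (simp add: rel_bd_def)
  also have "\<dots> = (\<Sum>\<sigma> \<in> set Xs. of_int (incidence ?Y \<sigma>) * c \<sigma>)"
    by (rule sum.mono_neutral_left) (auto simp: incidence_def)
  also have "\<dots> = (\<Sum>i<length Xs. of_int (incidence ?Y (Xs ! i)) * c (Xs ! i))"
    using distinct_Xs by (rule sum_set_conv_nth)
  also have "\<dots> = (boundary_mat Xs Ys *\<^sub>v chain_vec Xs c) $ j"
    unfolding boundary_mat_def transpose_minor_mat_mult_vec_nth[OF assms chain_vec_carrier]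
    by (simp add: chain_vec_def)
  finally show ?thesis .
qed

lemma rel_bd_top_outside:
  assumes "\<tau> \<notin> set Ys"
  shows "rel_bd N L (n + 1) c \<tau> = 0"
proof -
  have "\<not> (\<tau> \<in> N - L \<and> card \<tau> + 1 = n + 1)"
  proof
    assume "\<tau> \<in> N - L \<and> card \<tau> + 1 = n + 1"
    moreover then have "\<tau> \<in> set Xs" using relative_simplices assms by blast
    ultimately show False using card_Xs by simp
  qed
  then show ?thesis unfolding rel_bd_def by (rule if_not_P)
qed

lemma chain_eq_zero_if_chain_vec_zero:
  assumes "c \<in> rel_chains N L (n + 1)" and "chain_vec Xs c = 0\<^sub>v (length Xs)"
  shows "c = (\<lambda>_. 0)"
proof
  fix \<sigma>
  show "c \<sigma> = 0"
  proof (rule ccontr)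
    assume "c \<sigma> \<noteq> 0"
    then have "\<sigma> \<in> set Xs" using chain_support[OF assms(1)] by auto
    then obtain i where "i < length Xs" and "\<sigma> = Xs ! i" by (auto simp: in_set_conv_nth)
    then have "chain_vec Xs c $ i = c \<sigma>" by (simp add: chain_vec_def)
    then show False using assms(2) \<open>c \<sigma> \<noteq> 0\<close> \<open>i < length Xs\<close> by simp
  qed
qed

lemma vec_chain_in_rel_chains:
  assumes "v \<in> carrier_vec (length Xs)"
  shows "vec_chain Xs v \<in> rel_chains N L (n + 1)"
proof -
  have "\<sigma> \<in> set Xs" if "vec_chain Xs v \<sigma> \<noteq> 0" for \<sigma>
    using vec_chain_outside[OF assms] that by blast
  then show ?thesis using relative_simplices card_Xs unfolding rel_chains_def by auto
qed

lemma rel_bd_top_eq_iff: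
  assumes "c \<in> rel_chains N L n"
  shows "rel_bd N L (n + 1) b = c \<longleftrightarrow>
    (\<forall>j < length Ys. (boundary_mat Xs Ys *\<^sub>v chain_vec Xs b) $ j = c (Ys ! j))"
proof -
  have c_outside: "c \<tau> = 0" if "\<tau> \<notin> set Ys" for \<tau>
    using chain_support[OF assms] that by auto
  have "rel_bd N L (n + 1) b = c" if "\<forall>\<tau> \<in> set Ys. rel_bd N L (n + 1) b \<tau> = c \<tau>"
  proof
    fix \<tau>
    show "rel_bd N L (n + 1) b \<tau> = c \<tau>"
      using that c_outside rel_bd_top_outside by (cases "\<tau> \<in> set Ys") auto
  qed
  then have "rel_bd N L (n + 1) b = c \<longleftrightarrow> (\<forall>\<tau> \<in> set Ys. rel_bd N L (n + 1) b \<tau> = c \<tau>)"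
    by auto
  also have "\<dots> \<longleftrightarrow> (\<forall>j < length Ys. rel_bd N L (n + 1) b (Ys ! j) = c (Ys ! j))"
    by (simp add: all_set_conv_all_nth)
  finally show ?thesis by (simp only: rel_bd_top_nth cong: imp_cong)
qed

lemma rel_bd_top_injective_iff:
  "(\<forall>c \<in> (rel_chains N L (n + 1) :: ('v set \<Rightarrow> 'k) set). rel_bd N L (n + 1) c = (\<lambda>_. 0) \<longrightarrow> c = (\<lambda>_. 0)) \<longleftrightarrow>
    (minor_flag Xs Ys :: 'k::field) \<noteq> 0"
proof -
  have bd_zero_iff: "rel_bd N L (n + 1) c = (\<lambda>_. 0) \<longleftrightarrow>
      (boundary_mat Xs Ys :: 'k mat) *\<^sub>v chain_vec Xs c = 0\<^sub>v (length Xs)" for c :: "'v set \<Rightarrow> 'k"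
    unfolding rel_bd_top_eq_iff[OF zero_in_rel_chains] vec_eq_iff
    using boundary_mat_carrier[of Xs Ys] length_eq by auto
  show ?thesis
    unfolding minor_flag_nonzero_iff_kernel_trivial[OF length_eq]
  proof (intro iffI ballI impI)
    fix v :: "'k vec"
    assume "\<forall>c \<in> (rel_chains N L (n + 1) :: ('v set \<Rightarrow> 'k) set). rel_bd N L (n + 1) c = (\<lambda>_. 0) \<longrightarrow> c = (\<lambda>_. 0)"
      and v: "v \<in> carrier_vec (length Xs)" and "boundary_mat Xs Ys *\<^sub>v v = 0\<^sub>v (length Xs)"
    moreover have "rel_bd N L (n + 1) (vec_chain Xs v) = (\<lambda>_. 0)"
      using bd_zero_iff chain_vec_vec_chain[OF distinct_Xs v] \<open>boundary_mat Xs Ys *\<^sub>v v = 0\<^sub>v (length Xs)\<close>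
      by simp
    ultimately have "vec_chain Xs v = (\<lambda>_. 0)"
      using vec_chain_in_rel_chains[OF v] by blast
    then show "v = 0\<^sub>v (length Xs)"
      using chain_vec_vec_chain[OF distinct_Xs v] by (simp add: chain_vec_def zero_vec_def)
  next
    fix c :: "'v set \<Rightarrow> 'k"
    assume "\<forall>v \<in> carrier_vec (length Xs).
        (boundary_mat Xs Ys :: 'k mat) *\<^sub>v v = 0\<^sub>v (length Xs) \<longrightarrow> v = 0\<^sub>v (length Xs)"
      and c: "c \<in> rel_chains N L (n + 1)" and "rel_bd N L (n + 1) c = (\<lambda>_. 0)"
    then have "chain_vec Xs c = 0\<^sub>v (length Xs)"
      using bd_zero_iff chain_vec_carrier by blast
    then show "c = (\<lambda>_. 0)"
      using chain_eq_zero_if_chain_vec_zero[OF c] by blast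
  qed
qed

lemma rel_bd_top_surjective:
  assumes "(minor_flag Xs Ys :: 'k::field) \<noteq> 0" and c: "c \<in> (rel_chains N L n :: ('v set \<Rightarrow> 'k) set)"
  shows "\<exists>b \<in> rel_chains N L (n + 1). rel_bd N L (n + 1) b = c"
proof -
  let ?B = "boundary_mat Xs Ys :: 'k mat"
  have B: "?B \<in> carrier_mat (length Xs) (length Xs)"
    using boundary_mat_carrier[of Xs Ys] unfolding length_eq .
  moreover have "det ?B \<noteq> 0" using assms(1) by (simp add: det_boundary_mat[OF length_eq])
  ultimately obtain C where C: "C \<in> carrier_mat (length Xs) (length Xs)" and BC: "?B * C = 1\<^sub>m (length Xs)"
    using det_non_zero_imp_unit[of ?B "length Xs" "()"] unfolding Units_def ring_mat_def by auto
  define w where "w = chain_vec Ys c"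
  have w: "w \<in> carrier_vec (length Xs)" using chain_vec_carrier[of Ys c] unfolding w_def length_eq .
  define b where "b = vec_chain Xs (C *\<^sub>v w)"
  have Cw: "C *\<^sub>v w \<in> carrier_vec (length Xs)" using C w by (rule mult_mat_vec_carrier)
  have "?B *\<^sub>v chain_vec Xs b = w"
    unfolding b_def chain_vec_vec_chain[OF distinct_Xs Cw]
    using assoc_mult_mat_vec[OF B C w] BC w by simp
  then have "rel_bd N L (n + 1) b = c"
    unfolding rel_bd_top_eq_iff[OF c] using length_eq by (simp add: w_def chain_vec_def)
  moreover have "b \<in> rel_chains N L (n + 1)"
    unfolding b_def using vec_chain_in_rel_chains[OF Cw] .
  ultimately show ?thesis by blast
qed

lemma rel_acyclic_iff_minor_flag_nonzero:
  "rel_acyclic TYPE('k::field) N L \<longleftrightarrow> (minor_flag Xs Ys :: 'k) \<noteq> 0"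
  unfolding rel_acyclic_iff_bd_bij rel_bd_top_injective_iff using rel_bd_top_surjective by blast

end

lemma N_X_minus_N_Yc:
  assumes "\<forall>X\<in>set Xs. simplex V E lt X \<and> card X = n + 1"
    and "\<forall>Y\<in>set Ys. simplex V E lt Y \<and> card Y = n"
  shows "N_X V E lt n Xs - N_Yc V E lt n Ys = set Xs \<union> set Ys"
  using assms unfolding N_X_def N_Yc_def by fastforce

lemma minor_chi_nonzero_iff_acyclic_pair:
  assumes G: "labelled_graph V E lt" and NR: "non_resonant TYPE('k::field) V E lt m"
    and Xs: "length Xs = r" "distinct Xs" "\<forall>X\<in>set Xs. simplex V E lt X \<and> card X = n + 1"
    and Ys: "length Ys = r" "\<forall>Y\<in>set Ys. simplex V E lt Y \<and> card Y = n"
  shows "(minor_chi lt m Xs Ys :: 'k fls) \<noteq> 0 \<longleftrightarrow> acyclic_pair TYPE('k) V E lt n Xs Ys r"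
proof -
  interpret two_term_pair "N_X V E lt n Xs" "N_Yc V E lt n Ys" n Xs Ys
    using N_X_minus_N_Yc[OF Xs(3) Ys(2)] Xs Ys by unfold_locales auto
  show ?thesis
    unfolding acyclic_pair_def rel_acyclic_iff_minor_flag_nonzero
    using minor_chi_nonzero_iff_minor_flag_nonzero[OF G NR Xs(3) Ys(2)] Xs(1) Ys(1) by simp
qed

section \<open>Nonsingular minors and rank\<close>

context vector_space
begin

lemma distinct_independent_iff_lincomb_nth:
  "distinct ws \<and> independent (set ws) \<longleftrightarrow>
    (\<forall>c. (\<Sum>i<length ws. c i *s ws ! i) = 0 \<longrightarrow> (\<forall>i<length ws. c i = 0))"
proof (intro iffI allI impI)
  fix c i
  assume indep: "distinct ws \<and> independent (set ws)"
    and sum: "(\<Sum>i<length ws. c i *s ws ! i) = 0" and i: "i < length ws"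
  have inj: "inj_on ((!) ws) {..<length ws}" using indep by (simp add: inj_on_nth)
  define u where "u = c \<circ> inv_into {..<length ws} ((!) ws)"
  have u: "u (ws ! l) = c l" if "l < length ws" for l
    using that by (simp add: u_def inv_into_f_f[OF inj])
  have "(\<Sum>v\<in>set ws. u v *s v) = (\<Sum>l<length ws. u (ws ! l) *s ws ! l)"
    using indep by (simp add: sum_set_conv_nth)
  also have "\<dots> = 0"
    using sum by (simp add: u)
  finally have "(\<Sum>v\<in>set ws. u v *s v) = 0" .
  then have "u (ws ! i) = 0"
    using independentD[OF conjunct2[OF indep] finite_set subset_refl] i by simp
  then show "c i = 0" using u[OF i] by simp
next
  assume lincomb: "\<forall>c. (\<Sum>i<length ws. c i *s ws ! i) = 0 \<longrightarrow> (\<forall>i<length ws. c i = 0)"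
  have "distinct ws"
  proof (rule ccontr)
    assume "\<not> distinct ws"
    then obtain i j where ij: "i < length ws" "j < length ws" "i \<noteq> j" "ws ! i = ws ! j"
      by (auto simp: distinct_conv_nth)
    define c :: "nat \<Rightarrow> 'a" where "c l = (if l = i then 1 else if l = j then -1 else 0)" for l
    have "(\<Sum>l<length ws. c l *s ws ! l) = (\<Sum>l<length ws. (if l = i then ws ! i else 0) - (if l = j then ws ! j else 0))"
      using ij by (intro sum.cong) (auto simp: c_def)
    also have "\<dots> = 0" using ij by (simp add: sum_subtractf)
    finally have "c i = 0" using lincomb ij(1) by blast
    then show False by (simp add: c_def)
  qed
  moreover have "independent (set ws)"
  proof (rule independent_if_scalars_zero)
    fix u x assume "(\<Sum>x\<in>set ws. u x *s x) = 0" and "x \<in> set ws"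
    then obtain i where "i < length ws" "x = ws ! i" by (auto simp: in_set_conv_nth)
    moreover have "(\<Sum>l<length ws. u (ws ! l) *s ws ! l) = 0"
      using \<open>(\<Sum>x\<in>set ws. u x *s x) = 0\<close> \<open>distinct ws\<close> by (simp add: sum_set_conv_nth)
    ultimately show "u x = 0" using lincomb[rule_format, of "\<lambda>l. u (ws ! l)"] by simp
  qed simp
  ultimately show "distinct ws \<and> independent (set ws)" ..
qed

lemma dim_eq_if_subset_span: "A \<subseteq> B \<Longrightarrow> B \<subseteq> span A \<Longrightarrow> dim B = dim A"
proof -
  assume "A \<subseteq> B" "B \<subseteq> span A"
  obtain D where "D \<subseteq> A" "independent D" "A \<subseteq> span D" "card D = dim A"
    by (rule basis_exists)
  moreover have "B \<subseteq> span D"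
    using \<open>B \<subseteq> span A\<close> \<open>A \<subseteq> span D\<close> span_mono span_span by blast
  ultimately show "dim B = dim A"
    using \<open>A \<subseteq> B\<close> basis_card_eq_dim[of D B] by auto
qed

end

interpretation fun_space: vector_space "fun_scale :: 'k::field \<Rightarrow> ('a \<Rightarrow> 'k) \<Rightarrow> 'a \<Rightarrow> 'k"
  by unfold_locales (simp_all add: fun_scale_def fun_eq_iff algebra_simps)

lemma sum_fun_scale_apply: "(\<Sum>i\<in>I. fun_scale (c i) (g i)) y = (\<Sum>i\<in>I. c i * g i y)"
  by (induct I rule: infinite_finite_induct) (simp_all add: fun_scale_def)

lemma rows_independent_if_det_minor_mat_nonzero:
  fixes f :: "'r \<Rightarrow> 'c \<Rightarrow> 'k::field"
  assumes len: "length ys = length xs" and det: "det (minor_mat f xs ys) \<noteq> 0"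
  shows "distinct (map f xs) \<and> fun_space.independent (set (map f xs))"
  unfolding fun_space.distinct_independent_iff_lincomb_nth
proof (rule allI, rule impI)
  fix c assume sum: "(\<Sum>i<length (map f xs). fun_scale (c i) (map f xs ! i)) = 0"
  have "transpose_mat (minor_mat f xs ys) *\<^sub>v vec (length xs) c = 0\<^sub>v (length xs)"
  proof (rule eq_vecI)
    fix j assume "j < dim_vec (0\<^sub>v (length xs) :: 'k vec)"
    then have j: "j < length ys" using len by simp
    have "(transpose_mat (minor_mat f xs ys) *\<^sub>v vec (length xs) c) $ j =
        (\<Sum>i<length (map f xs). fun_scale (c i) (map f xs ! i)) (ys ! j)"
      unfolding transpose_minor_mat_mult_vec_nth[OF j vec_carrier] sum_fun_scale_apply
      by (simp add: mult.commute)
    then show "(transpose_mat (minor_mat f xs ys) *\<^sub>v vec (length xs) c) $ j = 0\<^sub>v (length xs) $ j"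
      using sum j len by simp
  qed (use len in simp)
  then have "vec (length xs) c = 0\<^sub>v (length xs)"
    using det det_minor_mat_eq_zero_iff[OF len, where f = f] vec_carrier by blast
  then show "\<forall>i<length (map f xs). c i = 0"
    by (auto simp: vec_eq_iff)
qed

lemma exists_col_extending_nonzero_minor:
  fixes f :: "'r \<Rightarrow> 'c \<Rightarrow> 'k::field"
  assumes support: "\<And>x y. y \<notin> C \<Longrightarrow> f x y = 0"
    and rows: "distinct (map f (x # xs))" "fun_space.independent (set (map f (x # xs)))"
    and ys: "length ys = length xs" and det_ys: "det (minor_mat f xs ys) \<noteq> 0"
  obtains y where "y \<in> C" "y \<notin> set ys" "det (minor_mat f (x # xs) (y # ys)) \<noteq> 0"
proof -
  \<comment> \<open>If every new first column \<open>y\<close> gave a singular minor, the cofactors \<open>cc\<close> of the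
    expansion along that column would be a linear relation among the rows, with coefficient
    \<open>cc 0 \<noteq> 0\<close> on \<open>f x\<close>.\<close>
  define cc where "cc i = (-1) ^ i * det (minor_mat f (take i (x # xs) @ drop (Suc i) (x # xs)) ys)" for i
  have expansion: "det (minor_mat f (x # xs) (y # ys)) = (\<Sum>i<length (x # xs). f ((x # xs) ! i) y * cc i)" for y
    unfolding cc_def using ys by (intro det_minor_mat_first_col_expansion) simp
  have "\<exists>y. y \<in> C \<and> y \<notin> set ys \<and> det (minor_mat f (x # xs) (y # ys)) \<noteq> 0"
  proof (rule ccontr)
    assume no_col: "\<not> ?thesis"
    have lincomb_zero: "(\<Sum>i<length (x # xs). f ((x # xs) ! i) y * cc i) = 0" for y
    proof (cases "y \<in> C")
      case True
      then have "det (minor_mat f (x # xs) (y # ys)) = 0"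
        using no_col det_minor_mat_repeated_col[of "x # xs" ys y f] ys by auto
      then show ?thesis using expansion by simp
    qed (simp add: support)
    have apply_eq: "(\<Sum>i<length (map f (x # xs)). fun_scale (cc i) (map f (x # xs) ! i)) y =
        (\<Sum>i<length (x # xs). f ((x # xs) ! i) y * cc i)" for y
      unfolding sum_fun_scale_apply by (intro sum.cong) (simp_all add: mult.commute del: list.map)
    then have "(\<Sum>i<length (map f (x # xs)). fun_scale (cc i) (map f (x # xs) ! i)) = 0"
      by (intro ext) (simp only: apply_eq lincomb_zero zero_fun_def)
    then have "cc 0 = 0"
      using rows fun_space.distinct_independent_iff_lincomb_nth by fastforce
    then show False using det_ys by (simp add: cc_def)
  qed
  then show ?thesis using that by blast
qed

lemma exists_nonzero_minor_if_rows_independent: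
  fixes f :: "'r \<Rightarrow> 'c \<Rightarrow> 'k::field"
  assumes support: "\<And>x y. y \<notin> C \<Longrightarrow> f x y = 0"
  shows "distinct (map f xs) \<Longrightarrow> fun_space.independent (set (map f xs)) \<Longrightarrow>
    \<exists>ys. distinct ys \<and> set ys \<subseteq> C \<and> length ys = length xs \<and> det (minor_mat f xs ys) \<noteq> 0"
proof (induction xs)
  case Nil
  show ?case using det_minor_mat_Nil[of f] by (intro exI[of _ "[]"]) simp
next
  case (Cons x xs)
  have "fun_space.independent (set (map f xs))"
    using Cons.prems(2) fun_space.independent_mono by auto
  then obtain ys where ys: "distinct ys" "set ys \<subseteq> C" "length ys = length xs"
      and det_ys: "det (minor_mat f xs ys) \<noteq> 0"
    using Cons.IH Cons.prems(1) by auto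
  obtain y where "y \<in> C" "y \<notin> set ys" "det (minor_mat f (x # xs) (y # ys)) \<noteq> 0"
    using exists_col_extending_nonzero_minor[OF support Cons.prems ys(3) det_ys] .
  then show ?case using ys by (intro exI[of _ "y # ys"]) simp
qed

lemma exists_nonzero_minor_of_size_dim:
  fixes f :: "'r \<Rightarrow> 'c \<Rightarrow> 'k::field"
  assumes "finite R" and support: "\<And>x y. y \<notin> C \<Longrightarrow> f x y = 0"
  obtains xs ys where "distinct xs" "set xs \<subseteq> R" "length xs = fun_space.dim (f ` R)"
    and "distinct ys" "set ys \<subseteq> C" "length ys = length xs" "det (minor_mat f xs ys) \<noteq> 0"
proof -
  obtain B where B: "B \<subseteq> f ` R" "fun_space.independent B" "card B = fun_space.dim (f ` R)"
    using fun_space.basis_exists[of "f ` R"] by metis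
  then obtain U where U: "U \<subseteq> R" "inj_on f U" "B = f ` U"
    by (auto simp: subset_image_inj)
  then obtain xs where xs: "distinct xs" "set xs = U"
    using finite_distinct_list[OF finite_subset[OF U(1) \<open>finite R\<close>]] by blast
  then have "distinct (map f xs)" and "set (map f xs) = B" using U by (auto simp: distinct_map)
  have "length xs = fun_space.dim (f ` R)"
    using xs U B(3) by (metis card_image distinct_card)
  moreover obtain ys where "distinct ys" "set ys \<subseteq> C" "length ys = length xs" "det (minor_mat f xs ys) \<noteq> 0"
    using exists_nonzero_minor_if_rows_independent[OF support \<open>distinct (map f xs)\<close>]
      B(2) \<open>set (map f xs) = B\<close> by auto
  ultimately show ?thesis using that xs U(1) by blast
qed

lemma length_le_dim_if_det_minor_nonzero:
  fixes f :: "'r \<Rightarrow> 'c \<Rightarrow> 'k::field"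
  assumes "finite R" and "set xs \<subseteq> R" and "length ys = length xs" and "det (minor_mat f xs ys) \<noteq> 0"
  shows "length xs \<le> fun_space.dim (f ` R)"
proof -
  obtain B where B: "B \<subseteq> f ` R" "f ` R \<subseteq> fun_space.span B" "card B = fun_space.dim (f ` R)"
    using fun_space.basis_exists[of "f ` R"] by metis
  have "finite B" using B(1) \<open>finite R\<close> finite_subset by blast
  have "distinct (map f xs)" and "fun_space.independent (set (map f xs))"
    using rows_independent_if_det_minor_mat_nonzero assms(3,4) by blast+
  moreover have "set (map f xs) \<subseteq> fun_space.span B" using assms(2) B(2) by auto
  ultimately show ?thesis
    using fun_space.independent_span_bound[OF \<open>finite B\<close>] B(3) by (metis distinct_card length_map)
qed

text \<open>Row \<open>\<sigma>\<close> of the flag matrix \<open>M\<close>, i.e. the boundary of the elementary chain \<open>\<sigma>\<close>.\<close>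

definition flag_bd_row :: "'v set \<Rightarrow> 'v set set \<Rightarrow> ('v set \<Rightarrow> nat) \<Rightarrow> nat \<Rightarrow> 'v::linorder set \<Rightarrow> 'v set \<Rightarrow> 'k::comm_ring_1"
  where "flag_bd_row V E lt n \<sigma> \<tau> = (if simplex V E lt \<tau> \<and> card \<tau> = n then of_int (incidence \<tau> \<sigma>) else 0)"

lemma flag_bd_eq_lincomb_rows:
  fixes c :: "'v::linorder set \<Rightarrow> 'k::field"
  assumes G: "labelled_graph V E lt"
  shows "flag_bd V E lt (n + 1) c =
    (\<Sum>\<sigma> \<in> {\<sigma>. simplex V E lt \<sigma> \<and> card \<sigma> = n + 1}. fun_scale (c \<sigma>) (flag_bd_row V E lt n \<sigma>))"
proof
  fix \<tau>
  let ?S = "{\<sigma>. simplex V E lt \<sigma> \<and> card \<sigma> = n + 1}"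
  have "finite ?S" by (rule finite_simplices_of_card[OF G])
  show "flag_bd V E lt (n + 1) c \<tau> = (\<Sum>\<sigma> \<in> ?S. fun_scale (c \<sigma>) (flag_bd_row V E lt n \<sigma>)) \<tau>"
  proof (cases "simplex V E lt \<tau> \<and> card \<tau> = n")
    case True
    have "{\<sigma> \<in> Collect (simplex V E lt) - {}. card \<sigma> = n + 1 \<and> \<tau> \<subseteq> \<sigma>} = {\<sigma> \<in> ?S. \<tau> \<subseteq> \<sigma>}" by auto
    with True have "flag_bd V E lt (n + 1) c \<tau> = (\<Sum>\<sigma> \<in> {\<sigma> \<in> ?S. \<tau> \<subseteq> \<sigma>}. of_int (incidence \<tau> \<sigma>) * c \<sigma>)"
      by (simp add: flag_bd_def rel_bd_def)
    also have "\<dots> = (\<Sum>\<sigma> \<in> ?S. of_int (incidence \<tau> \<sigma>) * c \<sigma>)"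
      using \<open>finite ?S\<close> by (intro sum.mono_neutral_left) (auto simp: incidence_def)
    finally show ?thesis
      using True by (simp add: sum_fun_scale_apply flag_bd_row_def mult.commute)
  next
    case False
    then have "(flag_bd_row V E lt n \<sigma> \<tau> :: 'k) = 0" for \<sigma>
      unfolding flag_bd_row_def by (rule if_not_P)
    moreover have "\<not> (\<tau> \<in> Collect (simplex V E lt) - {} \<and> card \<tau> + 1 = n + 1)"
      using False by simp
    then have "flag_bd V E lt (n + 1) c \<tau> = 0"
      unfolding flag_bd_def rel_bd_def by (rule if_not_P)
    ultimately show ?thesis by (simp add: sum_fun_scale_apply)
  qed
qed

lemma rank_bd_eq_dim_rows:
  assumes G: "labelled_graph V E lt"
  shows "rank_bd TYPE('k::field) V E lt (n + 1) =
    fun_space.dim (flag_bd_row V E lt n ` {\<sigma>. simplex V E lt \<sigma> \<and> card \<sigma> = n + 1} :: ('v::linorder set \<Rightarrow> 'k) set)"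
proof -
  let ?S = "{\<sigma>. simplex V E lt \<sigma> \<and> card \<sigma> = n + 1}"
  let ?row = "flag_bd_row V E lt n :: 'v set \<Rightarrow> 'v set \<Rightarrow> 'k"
  have "?row \<sigma> \<in> flag_bd V E lt (n + 1) ` flag_chains V E lt (n + 1)" if "\<sigma> \<in> ?S" for \<sigma>
  proof
    let ?\<delta> = "\<lambda>s. if s = \<sigma> then 1 else 0 :: 'k"
    have "finite ?S" by (rule finite_simplices_of_card[OF G])
    have "flag_bd V E lt (n + 1) ?\<delta> = (\<Sum>s\<in>?S. if s = \<sigma> then ?row s else 0)"
      unfolding flag_bd_eq_lincomb_rows[OF G] by (intro sum.cong) (auto simp: fun_scale_def)
    also have "\<dots> = ?row \<sigma>" using that \<open>finite ?S\<close> by simp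
    finally show "?row \<sigma> = flag_bd V E lt (n + 1) ?\<delta>" ..
    show "?\<delta> \<in> flag_chains V E lt (n + 1)"
      using that by (simp add: flag_chains_def)
  qed
  moreover have "flag_bd V E lt (n + 1) c \<in> fun_space.span (?row ` ?S)" for c
    unfolding flag_bd_eq_lincomb_rows[OF G]
    by (intro fun_space.span_sum fun_space.span_scale fun_space.span_base) blast
  ultimately show ?thesis
    unfolding rank_bd_def by (intro fun_space.dim_eq_if_subset_span) auto
qed

lemma minor_flag_eq_det_rows:
  assumes "\<forall>Y\<in>set Ys. simplex V E lt Y \<and> card Y = n"
  shows "minor_flag Xs Ys = det (minor_mat (flag_bd_row V E lt n) Xs Ys)"
  unfolding minor_flag_eq_det using assms
  by (intro arg_cong[where f = det] minor_mat_cong) (simp add: flag_bd_row_def)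

lemma exists_nonzero_minor_flag_of_length_rank_bd:
  assumes G: "labelled_graph V E lt"
  obtains Xs Ys where "length Xs = rank_bd TYPE('k::field) V E lt (n + 1)" "length Ys = length Xs"
    "distinct Xs" "\<forall>X\<in>set Xs. simplex V E lt X \<and> card X = n + 1"
    "distinct Ys" "\<forall>Y\<in>set Ys. simplex V E lt Y \<and> card Y = n"
    "(minor_flag Xs Ys :: 'k) \<noteq> 0"
proof -
  let ?S = "{\<sigma>. simplex V E lt \<sigma> \<and> card \<sigma> = n + 1}"
  have "finite ?S" by (rule finite_simplices_of_card[OF G])
  moreover have "(flag_bd_row V E lt n \<sigma> \<tau> :: 'k) = 0" if "\<tau> \<notin> {\<tau>. simplex V E lt \<tau> \<and> card \<tau> = n}" for \<sigma> \<tau>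
    unfolding flag_bd_row_def using that by (intro if_not_P) simp
  ultimately obtain Xs Ys where "distinct Xs" "set Xs \<subseteq> ?S" "length Xs = rank_bd TYPE('k) V E lt (n + 1)"
      "distinct Ys" "set Ys \<subseteq> {\<tau>. simplex V E lt \<tau> \<and> card \<tau> = n}" "length Ys = length Xs"
      "det (minor_mat (flag_bd_row V E lt n) Xs Ys :: 'k mat) \<noteq> 0"
    unfolding rank_bd_eq_dim_rows[OF G] by (rule exists_nonzero_minor_of_size_dim)
  moreover from this have "(minor_flag Xs Ys :: 'k) \<noteq> 0" by (subst minor_flag_eq_det_rows) auto
  ultimately show ?thesis using that by blast
qed

lemma minor_flag_eq_zero_if_length_gt_rank_bd:
  assumes G: "labelled_graph V E lt" and len: "length Ys = length Xs"
    and gt: "rank_bd TYPE('k::field) V E lt (n + 1) < length Xs"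
    and SX: "\<forall>X\<in>set Xs. simplex V E lt X \<and> card X = n + 1"
    and SY: "\<forall>Y\<in>set Ys. simplex V E lt Y \<and> card Y = n"
  shows "(minor_flag Xs Ys :: 'k) = 0"
proof (rule ccontr)
  let ?S = "{\<sigma>. simplex V E lt \<sigma> \<and> card \<sigma> = n + 1}"
  assume "minor_flag Xs Ys \<noteq> (0 :: 'k)"
  then have "det (minor_mat (flag_bd_row V E lt n) Xs Ys :: 'k mat) \<noteq> 0"
    by (simp add: minor_flag_eq_det_rows[OF SY])
  moreover have "finite ?S" by (rule finite_simplices_of_card[OF G])
  moreover have "set Xs \<subseteq> ?S" using SX by auto
  ultimately have "length Xs \<le> rank_bd TYPE('k) V E lt (n + 1)"
    unfolding rank_bd_eq_dim_rows[OF G] using len by (intro length_le_dim_if_det_minor_nonzero)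
  then show False using gt by simp
qed

lemma exists_nonzero_minor_chi_of_length_rank_bd:
  fixes V :: "'v::linorder set"
  assumes G: "labelled_graph V E lt" and NR: "non_resonant TYPE('k::field) V E lt m"
  obtains Xs Ys where "length Xs = rank_bd TYPE('k) V E lt (n + 1)" "length Ys = length Xs"
    "distinct Xs" "\<forall>X\<in>set Xs. simplex V E lt X \<and> card X = n + 1"
    "distinct Ys" "\<forall>Y\<in>set Ys. simplex V E lt Y \<and> card Y = n"
    "(minor_chi lt m Xs Ys :: 'k fls) \<noteq> 0"
  by (rule exists_nonzero_minor_flag_of_length_rank_bd[OF G, where 'k = 'k])
    (use minor_chi_nonzero_iff_minor_flag_nonzero[OF G NR] in blast)

lemma minor_chi_eq_zero_if_length_gt_rank_bd:
  assumes G: "labelled_graph V E lt" and NR: "non_resonant TYPE('k::field) V E lt m"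
    and "length Ys = length Xs" and "rank_bd TYPE('k) V E lt (n + 1) < length Xs"
    and "\<forall>X\<in>set Xs. simplex V E lt X \<and> card X = n + 1"
    and "\<forall>Y\<in>set Ys. simplex V E lt Y \<and> card Y = n"
  shows "(minor_chi lt m Xs Ys :: 'k fls) = 0"
  using minor_flag_eq_zero_if_length_gt_rank_bd[OF G] minor_chi_nonzero_iff_minor_flag_nonzero[OF G NR]
    assms(3-) by blast

theorem proposition3p8:
  fixes V :: "'v::linorder set" and E :: "'v set set" and lt :: "'v set \<Rightarrow> nat"
    and m :: "'v \<Rightarrow> int" and n r :: nat and Xs Ys :: "'v set list"
  assumes graph: "labelled_graph V E lt"
    and FC: "FC_type V E lt"
    and surj: "chi_surjective V m"
    and nonres: "non_resonant TYPE('k::field) V E lt m"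
    and Xs: "length Xs = r" "distinct Xs" "\<forall>X\<in>set Xs. simplex V E lt X \<and> card X = n + 1"
    and Ys: "length Ys = r" "distinct Ys" "\<forall>Y\<in>set Ys. simplex V E lt Y \<and> card Y = n"
  shows "((minor_chi lt m Xs Ys :: 'k fls) =
           (pL m Xs * qL E lt m Xs) / (pL m Ys * qL E lt m Ys) * fls_const (minor_flag Xs Ys)) \<and>
         ((minor_chi lt m Xs Ys :: 'k fls) \<noteq> 0 \<longleftrightarrow> acyclic_pair TYPE('k) V E lt n Xs Ys r) \<and>
         (\<exists>Xs' Ys'. length Xs' = rank_bd TYPE('k) V E lt (n + 1) \<and> length Ys' = length Xs' \<and>
            distinct Xs' \<and> (\<forall>X\<in>set Xs'. simplex V E lt X \<and> card X = n + 1) \<and>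
            distinct Ys' \<and> (\<forall>Y\<in>set Ys'. simplex V E lt Y \<and> card Y = n) \<and>
            (minor_chi lt m Xs' Ys' :: 'k fls) \<noteq> 0) \<and>
         (\<forall>Xs' Ys'. length Ys' = length Xs' \<and> length Xs' > rank_bd TYPE('k) V E lt (n + 1) \<and>
            distinct Xs' \<and> (\<forall>X\<in>set Xs'. simplex V E lt X \<and> card X = n + 1) \<and>
            distinct Ys' \<and> (\<forall>Y\<in>set Ys'. simplex V E lt Y \<and> card Y = n) \<longrightarrow>
            (minor_chi lt m Xs' Ys' :: 'k fls) = 0)"
proof -
  have "length Ys = length Xs" using Xs(1) Ys(1) by simp
  moreover obtain Xs' Ys' where "length Xs' = rank_bd TYPE('k) V E lt (n + 1)" "length Ys' = length Xs'"
    "distinct Xs'" "\<forall>X\<in>set Xs'. simplex V E lt X \<and> card X = n + 1"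
    "distinct Ys'" "\<forall>Y\<in>set Ys'. simplex V E lt Y \<and> card Y = n" "(minor_chi lt m Xs' Ys' :: 'k fls) \<noteq> 0"
    by (rule exists_nonzero_minor_chi_of_length_rank_bd[OF graph nonres])
  ultimately show ?thesis
    using minor_chi_eq_weight_ratio_minor_flag[OF graph nonres Xs(3) Ys(3)]
      minor_chi_nonzero_iff_acyclic_pair[OF graph nonres Xs Ys(1,3)]
      minor_chi_eq_zero_if_length_gt_rank_bd[OF graph nonres]
    by (intro conjI allI impI exI) blast+
qed

end
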